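(* The minimal typing algorithm of System $\mathsf{F_{<:}^{K\top}}$ terminates on every $\mathsf{F_{<:}^\top}$ term-in-context $\Theta\vdash^\top t$.
   Context: System $\mathsf{F_{<:}^{K\top}}$: raw types $T ::= \top \mid X \mid T\to T \mid \forall^{\mathsf K}(X<:T).T \mid \forall^\top(X<:T).T$, up to $\alpha$-conversion. Contexts $\Theta$: finite sequences of $X<:T$ or $x:T$ with distinct variables, each type well-formed over the preceding part. Raw terms $t ::= \mathsf{top}\mid x\mid\lambda(x:T).t\mid\Lambda(X<:T).t\mid t\,t\mid t\{T\}$. Algorithmic subtyping $\Theta\vdash_A S<:T$: (1) $\Theta\vdash_A T<:\top$; (2) $\Theta\vdash_A X<:X$; (3) if $T\not\equiv\top,X$ and $\Theta,X<:S,\Theta'\vdash_A S<:T$ then $\Theta,X<:S,\Theta'\vdash_A X<:T$; (4) from $S'<:S$, $T<:T'$ infer $S\to T<:S'\to T'$; (5) from $\Theta,X<:S\vdash_A T<:T'$ infer $\forall^{\mathsf K}(X<:S).T<:\forall^{\mathsf K}(X<:S).T'$; (6) from $\Theta\vdash_A T_0<:S_0$, $\Theta,X<:S_0\vdash_A S_1<:T_1$ infer $\forall^{\mathsf K}(X<:S_0).S_1<:\forall^\top(X<:T_0).T_1$; (7) from $\Theta\vdash_A T_0<:S_0$, $\Theta,X<:\top\vdash_A S_1<:T_1$ infer $\forall^\top(X<:S_0).S_1<:\forall^\top(X<:T_0).T_1$. The subtyping algorithm is the deterministic goal-directed search for such derivations (at most one rule applies to each judgement). $\Theta^*(T)=\Theta^*(S)$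 if $T\equiv X$ and $X<:S$ occurs in $\Theta$; $\Theta^*(T)=T$ otherwise. Minimal typing $\Theta\vdash_M t:T$: $\Theta,x:T,\Theta'\vdash_M x:T$; $\Theta\vdash_M\mathsf{top}:\top$; from $\Theta,x:S\vdash_M t:T$ infer $\Theta\vdash_M\lambda(x:S).t:S\to T$; from $\Theta\vdash_M r:R$, $\Theta\vdash_M s:S$, $\Theta\vdash S<:S'$ with $\Theta^*(R)=S'\to T$ infer $\Theta\vdash_M r\,s:T$; from $\Theta,X<:S\vdash_M t:T$ infer $\Theta\vdash_M\Lambda(X<:S).t:\forall^{\mathsf K}(X<:S).T$; from $\Theta\vdash_M r:R$, $\Theta\vdash S<:S'$ with $\Theta^*(R)=\forall^{\mathsf K}(X<:S').T$ or $\forall^\top(X<:S').T$ infer $\Theta\vdash_M r\{S\}:T[S/X]$. The minimal typing algorithm computes, by recursion on the structure of $t$, the unique $T$ with $\Theta\vdash_M t:T$ or rejects, deciding each subtyping premise $\Theta\vdash S<:S'$ by running the subtyping algorithm on $\Theta\vdash_A S<:S'$. An $\mathsf{F_{<:}^\top}$ term-in-context is one whose context and type annotations contain only $\forall^\top$ quantifiers. *)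

theory Defs
  imports Main
begin

text \<open>Types up to alpha-conversion are represented with de Bruijn indices.
  Type variables are indexed among the type bindings of the context only
  (index 0 = most recently bound type variable); term variables are indexed
  among the term bindings only.  AllK S T is the kernel quantifier
  forall^K (X<:S).T, AllT S T is the full quantifier forall^top (X<:S).T;
  in both, T lives under one extra type binder.\<close>

datatype ty = Top | TVar nat | Arr ty ty | AllK ty ty | AllT ty ty

datatype tm = TopT | Var nat | Lam ty tm | TLam ty tm | App tm tm | TApp tm ty

text \<open>Context entries, newest first: TB S is X<:S, VB T is x:T.\<close>
datatype bind = TB ty | VB ty

fun shift :: "nat \<Rightarrow> nat \<Rightarrow> ty \<Rightarrow> ty" where
  "shift d c Top = Top"
| "shift d c (TVar k) = (if k < c then TVar k else TVar (k + d))"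
| "shift d c (Arr A B) = Arr (shift d c A) (shift d c B)"
| "shift d c (AllK A B) = AllK (shift d c A) (shift d (Suc c) B)"
| "shift d c (AllT A B) = AllT (shift d c A) (shift d (Suc c) B)"

text \<open>inst j U T: substitute U (a type over the context outside the j binders)
  for the variable with index j in T, decrementing higher indices.
  T[S/X] for the outermost bound X is inst 0 S T.\<close>
fun inst :: "nat \<Rightarrow> ty \<Rightarrow> ty \<Rightarrow> ty" where
  "inst j U Top = Top"
| "inst j U (TVar k) = (if k < j then TVar k else if k = j then shift j 0 U else TVar (k - 1))"
| "inst j U (Arr A B) = Arr (inst j U A) (inst j U B)"
| "inst j U (AllK A B) = AllK (inst j U A) (inst (Suc j) U B)"
| "inst j U (AllT A B) = AllT (inst j U A) (inst (Suc j) U B)"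

fun wf_ty :: "nat \<Rightarrow> ty \<Rightarrow> bool" where
  "wf_ty n Top = True"
| "wf_ty n (TVar k) = (k < n)"
| "wf_ty n (Arr A B) = (wf_ty n A \<and> wf_ty n B)"
| "wf_ty n (AllK A B) = (wf_ty n A \<and> wf_ty (Suc n) B)"
| "wf_ty n (AllT A B) = (wf_ty n A \<and> wf_ty (Suc n) B)"

fun tyctx :: "bind list \<Rightarrow> ty list" where
  "tyctx [] = []"
| "tyctx (TB S # \<Theta>) = S # tyctx \<Theta>"
| "tyctx (VB T # \<Theta>) = tyctx \<Theta>"

fun wf_ctx :: "bind list \<Rightarrow> bool" where
  "wf_ctx [] = True"
| "wf_ctx (TB S # \<Theta>) = (wf_ctx \<Theta> \<and> wf_ty (length (tyctx \<Theta>)) S)"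
| "wf_ctx (VB T # \<Theta>) = (wf_ctx \<Theta> \<and> wf_ty (length (tyctx \<Theta>)) T)"

text \<open>Type of term variable j, expressed over the whole context.\<close>
fun lookup :: "bind list \<Rightarrow> nat \<Rightarrow> ty option" where
  "lookup [] j = None"
| "lookup (TB S # \<Theta>) j = map_option (shift 1 0) (lookup \<Theta> j)"
| "lookup (VB T # \<Theta>) 0 = Some T"
| "lookup (VB T # \<Theta>) (Suc j) = lookup \<Theta> j"

function expose :: "ty list \<Rightarrow> ty \<Rightarrow> ty" where
  "expose \<Gamma> (TVar k) =
     (if k < length \<Gamma> then shift (Suc k) 0 (expose (drop (Suc k) \<Gamma>) (\<Gamma> ! k)) else TVar k)"
| "expose \<Gamma> Top = Top"
| "expose \<Gamma> (Arr A B) = Arr A B"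
| "expose \<Gamma> (AllK A B) = AllK A B"
| "expose \<Gamma> (AllT A B) = AllT A B"
  by pat_completeness auto
termination by (relation "measure (\<lambda>(\<Gamma>, _). length \<Gamma>)") auto

text \<open>sub_prems \<Gamma> S T = None if no rule of the algorithmic system applies to
  the judgement \<Gamma> |-A S <: T; otherwise Some ps with ps the premises (in order)
  of the unique applicable rule (1)-(7).\<close>
definition sub_prems :: "ty list \<Rightarrow> ty \<Rightarrow> ty \<Rightarrow> (ty list \<times> ty \<times> ty) list option" where
  "sub_prems \<Gamma> S T =
    (if T = Top then Some []
     else (case S of
        TVar k \<Rightarrow>
          (if T = TVar k then Some []
           else if k < length \<Gamma> then Some [(\<Gamma>, shift (Suc k) 0 (\<Gamma> ! k), T)]
           else None)
      | Arr S1 S2 \<Rightarrow> (case T of Arr T1 T2 \<Rightarrow> Some [(\<Gamma>, T1, S1), (\<Gamma>, S2, T2)] | _ \<Rightarrow> None)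
      | AllK S0 S1 \<Rightarrow>
          (case T of
             AllK T0 T1 \<Rightarrow> (if S0 = T0 then Some [(S0 # \<Gamma>, S1, T1)] else None)
           | AllT T0 T1 \<Rightarrow> Some [(\<Gamma>, T0, S0), (S0 # \<Gamma>, S1, T1)]
           | _ \<Rightarrow> None)
      | AllT S0 S1 \<Rightarrow>
          (case T of AllT T0 T1 \<Rightarrow> Some [(\<Gamma>, T0, S0), (Top # \<Gamma>, S1, T1)] | _ \<Rightarrow> None)
      | Top \<Rightarrow> None))"

inductive sub :: "ty list \<times> ty \<times> ty \<Rightarrow> bool" where
  "sub_prems \<Gamma> S T = Some ps \<Longrightarrow> list_all sub ps \<Longrightarrow> sub (\<Gamma>, S, T)"

text \<open>Termination of the deterministic goal-directed search: it stops (rejecting)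
  if no rule applies; otherwise it runs the premises in order, stopping at
  the first failing one.\<close>
inductive sub_halts :: "ty list \<times> ty \<times> ty \<Rightarrow> bool" where
  "sub_prems \<Gamma> S T = None \<Longrightarrow> sub_halts (\<Gamma>, S, T)"
| "sub_prems \<Gamma> S T = Some ps \<Longrightarrow>
     (\<forall>i < length ps. (\<forall>j < i. sub (ps ! j)) \<longrightarrow> sub_halts (ps ! i)) \<Longrightarrow>
     sub_halts (\<Gamma>, S, T)"

inductive mtype :: "bind list \<Rightarrow> tm \<Rightarrow> ty \<Rightarrow> bool" where
  mt_var: "lookup \<Theta> j = Some T \<Longrightarrow> mtype \<Theta> (Var j) T"
| mt_top: "mtype \<Theta> TopT Top"
| mt_lam: "mtype (VB S # \<Theta>) t T \<Longrightarrow> mtype \<Theta> (Lam S t) (Arr S T)"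
| mt_app: "mtype \<Theta> r R \<Longrightarrow> mtype \<Theta> s S \<Longrightarrow> sub (tyctx \<Theta>, S, S') \<Longrightarrow>
           expose (tyctx \<Theta>) R = Arr S' T \<Longrightarrow> mtype \<Theta> (App r s) T"
| mt_tlam: "mtype (TB S # \<Theta>) t T \<Longrightarrow> mtype \<Theta> (TLam S t) (AllK S T)"
| mt_tapp: "mtype \<Theta> r R \<Longrightarrow> sub (tyctx \<Theta>, S, S') \<Longrightarrow>
           expose (tyctx \<Theta>) R = AllK S' T \<or> expose (tyctx \<Theta>) R = AllT S' T \<Longrightarrow>
           mtype \<Theta> (TApp r S) (inst 0 S T)"

text \<open>Subtyping query issued by the algorithm at an application / type application
  node, given the computed types of the subterms (None: no query, reject).\<close>
definition app_query :: "bind list \<Rightarrow> ty \<Rightarrow> ty \<Rightarrow> (ty list \<times> ty \<times> ty) option" where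
  "app_query \<Theta> R S = (case expose (tyctx \<Theta>) R of
      Arr S' T \<Rightarrow> Some (tyctx \<Theta>, S, S') | _ \<Rightarrow> None)"

definition tapp_query :: "bind list \<Rightarrow> ty \<Rightarrow> ty \<Rightarrow> (ty list \<times> ty \<times> ty) option" where
  "tapp_query \<Theta> R S = (case expose (tyctx \<Theta>) R of
      AllK S' T \<Rightarrow> Some (tyctx \<Theta>, S, S')
    | AllT S' T \<Rightarrow> Some (tyctx \<Theta>, S, S')
    | _ \<Rightarrow> None)"

inductive typing_halts :: "bind list \<Rightarrow> tm \<Rightarrow> bool" where
  "typing_halts \<Theta> TopT"
| "typing_halts \<Theta> (Var j)"
| "typing_halts (VB S # \<Theta>) t \<Longrightarrow> typing_halts \<Theta> (Lam S t)"
| "typing_halts (TB S # \<Theta>) t \<Longrightarrow> typing_halts \<Theta> (TLam S t)"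
| "typing_halts \<Theta> r \<Longrightarrow> typing_halts \<Theta> s \<Longrightarrow>
   (\<forall>R S q. mtype \<Theta> r R \<longrightarrow> mtype \<Theta> s S \<longrightarrow> app_query \<Theta> R S = Some q \<longrightarrow> sub_halts q) \<Longrightarrow>
   typing_halts \<Theta> (App r s)"
| "typing_halts \<Theta> r \<Longrightarrow>
   (\<forall>R q. mtype \<Theta> r R \<longrightarrow> tapp_query \<Theta> R S = Some q \<longrightarrow> sub_halts q) \<Longrightarrow>
   typing_halts \<Theta> (TApp r S)"

fun no_K :: "ty \<Rightarrow> bool" where
  "no_K Top = True"
| "no_K (TVar k) = True"
| "no_K (Arr A B) = (no_K A \<and> no_K B)"
| "no_K (AllK A B) = False"
| "no_K (AllT A B) = (no_K A \<and> no_K B)"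

fun bind_ty :: "bind \<Rightarrow> ty" where
  "bind_ty (TB S) = S" | "bind_ty (VB T) = T"

definition ctx_top :: "bind list \<Rightarrow> bool" where
  "ctx_top \<Theta> = (\<forall>b \<in> set \<Theta>. no_K (bind_ty b))"

fun tm_top :: "tm \<Rightarrow> bool" where
  "tm_top TopT = True"
| "tm_top (Var j) = True"
| "tm_top (Lam S t) = (no_K S \<and> tm_top t)"
| "tm_top (TLam S t) = (no_K S \<and> tm_top t)"
| "tm_top (App r s) = (tm_top r \<and> tm_top s)"
| "tm_top (TApp r S) = (no_K S \<and> tm_top r)"

fun wf_tm :: "bind list \<Rightarrow> tm \<Rightarrow> bool" where
  "wf_tm \<Theta> TopT = True"
| "wf_tm \<Theta> (Var j) = (lookup \<Theta> j \<noteq> None)"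
| "wf_tm \<Theta> (Lam S t) = (wf_ty (length (tyctx \<Theta>)) S \<and> wf_tm (VB S # \<Theta>) t)"
| "wf_tm \<Theta> (TLam S t) = (wf_ty (length (tyctx \<Theta>)) S \<and> wf_tm (TB S # \<Theta>) t)"
| "wf_tm \<Theta> (App r s) = (wf_tm \<Theta> r \<and> wf_tm \<Theta> s)"
| "wf_tm \<Theta> (TApp r S) = (wf_tm \<Theta> r \<and> wf_ty (length (tyctx \<Theta>)) S)"

end

theory Submission
  imports Defs
begin

text \<open>Weigh a type variable one more than its bound.  On judgements without kernel
  quantifiers every rule of the subtyping algorithm produces premises of strictly smaller
  total weight: the only rule that extends the context, rule (7), binds the new variable
  to \<open>Top\<close>, of weight 1.  Rule (6), which binds it to the left bound instead and is the
  source of the undecidability of \<open>F<:\<close>, needs a kernel quantifier on the left.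
  Minimal types of \<open>F<:\<^sup>\<top>\<close> terms do contain kernel quantifiers, introduced by type
  abstraction, but only along their spine of results.  Comparing such a type with a
  kernel-free one yields kernel-free premises and premises of the same kind with a
  smaller left-hand side, and these are the only queries the typing algorithm issues.\<close>

fun weight :: "nat list \<Rightarrow> ty \<Rightarrow> nat" where
  "weight w Top = 1"
| "weight w (TVar k) = (if k < length w then Suc (w ! k) else 1)"
| "weight w (Arr A B) = Suc (weight w A + weight w B)"
| "weight w (AllK A B) = Suc (weight w A + weight (weight w A # w) B)"
| "weight w (AllT A B) = Suc (weight w A + weight (1 # w) B)"

fun ctx_weights :: "ty list \<Rightarrow> nat list" where
  "ctx_weights [] = []"
| "ctx_weights (A # \<Gamma>) = weight (ctx_weights \<Gamma>) A # ctx_weights \<Gamma>"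

fun sub_weight :: "ty list \<times> ty \<times> ty \<Rightarrow> nat" where
  "sub_weight (\<Gamma>, S, T) = weight (ctx_weights \<Gamma>) S + weight (ctx_weights \<Gamma>) T"

lemma weight_shift:
  "weight (w1 @ w2 @ w3) (shift (length w2) (length w1) T) = weight (w1 @ w3) T"
proof (induction T arbitrary: w1)
  case (AllK A B)
  then show ?case using AllK.IH(2)[of "weight (w1 @ w3) A # w1"] by simp
next
  case (AllT A B)
  then show ?case using AllT.IH(2)[of "1 # w1"] by simp
qed (auto simp: nth_append)

lemma length_ctx_weights [simp]: "length (ctx_weights \<Gamma>) = length \<Gamma>"
  by (induction \<Gamma>) auto

lemma drop_ctx_weights: "drop n (ctx_weights \<Gamma>) = ctx_weights (drop n \<Gamma>)"
  by (induction \<Gamma> arbitrary: n) (auto simp: drop_Cons split: nat.splits)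

lemma nth_ctx_weights:
  "k < length \<Gamma> \<Longrightarrow> ctx_weights \<Gamma> ! k = weight (ctx_weights (drop (Suc k) \<Gamma>)) (\<Gamma> ! k)"
  by (induction \<Gamma> arbitrary: k) (auto simp: nth_Cons split: nat.splits)

lemma weight_shifted_bound:
  assumes "k < length \<Gamma>"
  shows "weight (ctx_weights \<Gamma>) (shift (Suc k) 0 (\<Gamma> ! k)) = ctx_weights \<Gamma> ! k"
proof -
  let ?w = "ctx_weights \<Gamma>"
  have "weight ?w (shift (Suc k) 0 (\<Gamma> ! k)) = weight (drop (Suc k) ?w) (\<Gamma> ! k)"
    using weight_shift[of "[]" "take (Suc k) ?w" "drop (Suc k) ?w" "\<Gamma> ! k"] assms by simp
  also have "\<dots> = ?w ! k"
    using nth_ctx_weights[OF assms] by (simp add: drop_ctx_weights)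
  finally show ?thesis .
qed

lemma no_K_shift: "no_K T \<Longrightarrow> no_K (shift d c T)"
  by (induction T arbitrary: c) auto

lemma no_K_inst: "no_K U \<Longrightarrow> no_K T \<Longrightarrow> no_K (inst j U T)"
  by (induction T arbitrary: j) (auto intro: no_K_shift)

lemma sub_halts_if_prems_halt:
  assumes "\<And>ps p. sub_prems \<Gamma> S T = Some ps \<Longrightarrow> p \<in> set ps \<Longrightarrow> sub_halts p"
  shows "sub_halts (\<Gamma>, S, T)"
proof (cases "sub_prems \<Gamma> S T")
  case None
  then show ?thesis by (rule sub_halts.intros(1))
next
  case (Some ps)
  then show ?thesis using assms[OF Some] nth_mem by (intro sub_halts.intros(2)[OF Some]) blast
qed

lemma sub_prems_no_K_decrease:
  assumes "sub_prems \<Gamma> S T = Some ps" and "(\<Gamma>', S', T') \<in> set ps"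
    and "list_all no_K \<Gamma>" and "no_K S" and "no_K T"
  shows "list_all no_K \<Gamma>' \<and> no_K S' \<and> no_K T' \<and> sub_weight (\<Gamma>', S', T') < sub_weight (\<Gamma>, S, T)"
  using assms
  by (auto simp: sub_prems_def weight_shifted_bound list_all_iff
      intro!: no_K_shift nth_mem split: if_splits ty.splits)

lemma sub_halts_no_K:
  "list_all no_K \<Gamma> \<Longrightarrow> no_K S \<Longrightarrow> no_K T \<Longrightarrow> sub_halts (\<Gamma>, S, T)"
proof (induction "sub_weight (\<Gamma>, S, T)" arbitrary: \<Gamma> S T rule: less_induct)
  case less
  show ?case
  proof (rule sub_halts_if_prems_halt)
    fix ps p assume "sub_prems \<Gamma> S T = Some ps" and "p \<in> set ps"
    moreover obtain \<Gamma>' S' T' where "p = (\<Gamma>', S', T')" by (cases p)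
    ultimately show "sub_halts p"
      using sub_prems_no_K_decrease less by blast
  qed
qed

fun K_on_spine :: "ty \<Rightarrow> bool" where
  "K_on_spine Top = True"
| "K_on_spine (TVar k) = True"
| "K_on_spine (Arr A B) = (no_K A \<and> K_on_spine B)"
| "K_on_spine (AllK A B) = (no_K A \<and> K_on_spine B)"
| "K_on_spine (AllT A B) = (no_K A \<and> no_K B)"

lemma no_K_imp_K_on_spine: "no_K T \<Longrightarrow> K_on_spine T"
  by (induction T) auto

lemma sub_halts_K_on_spine:
  "list_all no_K \<Gamma> \<Longrightarrow> K_on_spine S \<Longrightarrow> no_K T \<Longrightarrow> sub_halts (\<Gamma>, S, T)"
proof (induction S arbitrary: \<Gamma> T)
  case (Arr S1 S2)
  show ?case
  proof (rule sub_halts_if_prems_halt)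
    fix ps p assume "sub_prems \<Gamma> (Arr S1 S2) T = Some ps" and "p \<in> set ps"
    then show "sub_halts p"
      using Arr by (auto simp: sub_prems_def intro: sub_halts_no_K split: if_splits ty.splits)
  qed
next
  case (AllK S0 S1)
  show ?case
  proof (rule sub_halts_if_prems_halt)
    fix ps p assume "sub_prems \<Gamma> (AllK S0 S1) T = Some ps" and "p \<in> set ps"
    then show "sub_halts p"
      using AllK by (auto simp: sub_prems_def intro: sub_halts_no_K split: if_splits ty.splits)
  qed
qed (auto intro: sub_halts_no_K)

lemma K_on_spine_inst: "no_K U \<Longrightarrow> K_on_spine T \<Longrightarrow> K_on_spine (inst j U T)"
  by (induction T arbitrary: j) (auto intro: no_K_shift no_K_inst no_K_imp_K_on_spine)

lemma expose_no_K: "list_all no_K \<Gamma> \<Longrightarrow> no_K T \<Longrightarrow> no_K (expose \<Gamma> T)"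
proof (induction \<Gamma> T rule: expose.induct)
  case (1 \<Gamma> k)
  then show ?case
    by (auto simp: list_all_iff intro!: no_K_shift dest: in_set_dropD)
qed auto

lemma expose_K_on_spine:
  assumes "list_all no_K \<Gamma>" and "K_on_spine T"
  shows "K_on_spine (expose \<Gamma> T)"
proof (cases T)
  case (TVar k)
  then show ?thesis
    using expose_no_K[OF assms(1), of T] no_K_imp_K_on_spine by (metis no_K.simps(2))
qed (use assms in simp_all)

lemma list_all_no_K_tyctx: "ctx_top \<Theta> \<Longrightarrow> list_all no_K (tyctx \<Theta>)"
  by (induction \<Theta> rule: tyctx.induct) (auto simp: ctx_top_def)

lemma no_K_lookup: "ctx_top \<Theta> \<Longrightarrow> lookup \<Theta> j = Some T \<Longrightarrow> no_K T"
  by (induction \<Theta> j arbitrary: T rule: lookup.induct) (auto simp: ctx_top_def no_K_shift)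

lemma mtype_K_on_spine: "mtype \<Theta> t R \<Longrightarrow> ctx_top \<Theta> \<Longrightarrow> tm_top t \<Longrightarrow> K_on_spine R"
proof (induction rule: mtype.induct)
  case (mt_var \<Theta> j T)
  then show ?case using no_K_lookup no_K_imp_K_on_spine by blast
next
  case (mt_app \<Theta> r R s S S' T)
  then have "K_on_spine R" by simp
  then have "K_on_spine (expose (tyctx \<Theta>) R)"
    using mt_app.prems(1) expose_K_on_spine list_all_no_K_tyctx by blast
  then show ?case using mt_app.hyps(4) by simp
next
  case (mt_tapp \<Theta> r R S S' T)
  then have "K_on_spine R" by simp
  then have "K_on_spine (expose (tyctx \<Theta>) R)"
    using mt_tapp.prems(1) expose_K_on_spine list_all_no_K_tyctx by blast
  then show ?case using mt_tapp.hyps(3) mt_tapp.prems(2)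
    by (auto intro: K_on_spine_inst no_K_imp_K_on_spine[OF no_K_inst])
qed (simp_all add: ctx_top_def)

lemma app_query_halts:
  assumes "ctx_top \<Theta>" and "K_on_spine R" and "K_on_spine S" and "app_query \<Theta> R S = Some q"
  shows "sub_halts q"
proof -
  have "K_on_spine (expose (tyctx \<Theta>) R)"
    using assms(1,2) expose_K_on_spine list_all_no_K_tyctx by blast
  with assms(4) obtain S' where "no_K S'" and "q = (tyctx \<Theta>, S, S')"
    by (auto simp: app_query_def split: ty.splits)
  then show ?thesis
    using sub_halts_K_on_spine list_all_no_K_tyctx assms(1,3) by blast
qed

lemma tapp_query_halts:
  assumes "ctx_top \<Theta>" and "K_on_spine R" and "no_K S" and "tapp_query \<Theta> R S = Some q"
  shows "sub_halts q"
proof -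
  have "K_on_spine (expose (tyctx \<Theta>) R)"
    using assms(1,2) expose_K_on_spine list_all_no_K_tyctx by blast
  with assms(4) obtain S' where "no_K S'" and "q = (tyctx \<Theta>, S, S')"
    by (auto simp: tapp_query_def split: ty.splits)
  then show ?thesis
    using sub_halts_no_K list_all_no_K_tyctx assms(1,3) by blast
qed

theorem proposition8p4:
  assumes "wf_ctx \<Theta>" and "ctx_top \<Theta>" and "wf_tm \<Theta> t" and "tm_top t"
  shows "typing_halts \<Theta> t"
  \<comment> \<open>Scoping is irrelevant: an unbound type variable weighs 1 and is its own exposure.\<close>
  using assms(2,4)
proof (induction t arbitrary: \<Theta>)
  case (App r s)
  have "sub_halts q"
    if "mtype \<Theta> r R" and "mtype \<Theta> s S" and "app_query \<Theta> R S = Some q" for R S q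
    using App.prems that
    by (intro app_query_halts[OF App.prems(1) _ _ that(3)] mtype_K_on_spine[OF that(1)]
        mtype_K_on_spine[OF that(2)]) simp_all
  with App show ?case by (intro typing_halts.intros) simp_all
next
  case (TApp r S)
  have "sub_halts q" if "mtype \<Theta> r R" and "tapp_query \<Theta> R S = Some q" for R q
    using TApp.prems that
    by (intro tapp_query_halts[OF TApp.prems(1) _ _ that(2)] mtype_K_on_spine[OF that(1)]) simp_all
  with TApp show ?case by (intro typing_halts.intros) simp_all
qed (simp_all add: typing_halts.intros ctx_top_def)

end
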